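(* Let $n$ be a positive integer and $m$ a positive even integer. Let $\mathcal{A}$ and $\mathcal{B}$ be $m$-th order $n$-dimensional real weakly symmetric tensors with $\mathcal{B}$ positive definite, and let $\lambda_{\max}$ be the largest $\mathcal{B}_r$-eigenvalue of $\mathcal{A}$. Define $f_2:\mathbb{R}^n\to\mathbb{R}$ by $$f_2(x)=\frac{1}{2m}(\mathcal{B}x^m)^2-\frac{1}{m}\mathcal{A}x^m,$$ whose gradient is $\nabla f_2(x)=(\mathcal{B}x^m)\,\mathcal{B}x^{m-1}-\mathcal{A}x^{m-1}$. Then: (a) $f_2$ is coercive on $\mathbb{R}^n$, i.e. $f_2(x)\to+\infty$ as $\|x\|\to\infty$. (b) The critical points of $f_2$ are (i) $x=0$, and (ii) any $\mathcal{B}_r$-eigenvector $x$ of $\mathcal{A}$ associated with a $\mathcal{B}_r$-eigenvalue $\lambda>0$ of $\mathcal{A}$ satisfying $\mathcal{B}x^m=\lambda$. (c) If $\lambda_{\max}>0$, then $f_2$ attains its global minimum value $\min f_2(x)=-\frac{1}{2m}\lambda_{\max}^2$ at any $\mathcal{B}_r$-eigenvector associated with $\lambda_{\max}$ satisfying $\mathcal{B}x^m=\lambda_{\max}$. (d) If $\lambda_{\max}\le0$, then $x=0$ is the unique critical point of $f_2$, and it is the unique global minimizer of $f_2$ on $\mathbb{R}^n$.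
   Context: An $m$-th order $n$-dimensional real tensor is an array $\mathcal{A}=(A_{i_1\cdots i_m})$ with indices in $\{1,\dots,n\}$ and real entries. For $x\in\mathbb{R}^n$, $\mathcal{A}x^m=\sum_{i_1,\dots,i_m=1}^n A_{i_1\cdots i_m}x_{i_1}\cdots x_{i_m}$, and $\mathcal{A}x^{m-1}\in\mathbb{R}^n$ has $i$-th entry $\sum_{i_2,\dots,i_m=1}^n A_{i i_2\cdots i_m}x_{i_2}\cdots x_{i_m}$. A tensor is weakly symmetric if $\nabla(\mathcal{A}x^m)=m\,\mathcal{A}x^{m-1}$ for all $x$, and positive definite if $\mathcal{A}x^m>0$ for all $x\ne0$. With $\mathcal{B}$ weakly symmetric positive definite, $\lambda\in\mathbb{R}$ is a $\mathcal{B}_r$-eigenvalue of $\mathcal{A}$, with $\mathcal{B}_r$-eigenvector $x\in\mathbb{R}^n\setminus\{0\}$, if $\mathcal{A}x^{m-1}=\lambda\,\mathcal{B}x^{m-1}$. The set of $\mathcal{B}_r$-eigenvalues is nonempty and has a largest element $\lambda_{\max}$. *)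

theory Defs
  imports "HOL-Analysis.Analysis"
begin

text \<open>An m-th order tensor with index type 'n is a function from index lists
  (of length m) to the reals; entries at lists of other lengths are irrelevant.\<close>
type_synonym 'n tensor = "'n list \<Rightarrow> real"

definition tform :: "nat \<Rightarrow> ('n::finite) tensor \<Rightarrow> real^'n \<Rightarrow> real" where
  "tform m A x = (\<Sum>is\<in>{is. length is = m}. A is * prod_list (map (\<lambda>j. x $ j) is))"

definition tvec :: "nat \<Rightarrow> ('n::finite) tensor \<Rightarrow> real^'n \<Rightarrow> real^'n" where
  "tvec m A x = (\<chi> i. \<Sum>is\<in>{is. length is = m - 1}. A (i # is) * prod_list (map (\<lambda>j. x $ j) is))"

definition weakly_symmetric :: "nat \<Rightarrow> ('n::finite) tensor \<Rightarrow> bool" where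
  "weakly_symmetric m A \<longleftrightarrow>
     (\<forall>x. ((\<lambda>y. tform m A y) has_derivative (\<lambda>h. (of_nat m *\<^sub>R tvec m A x) \<bullet> h)) (at x))"

definition pos_def_tensor :: "nat \<Rightarrow> ('n::finite) tensor \<Rightarrow> bool" where
  "pos_def_tensor m A \<longleftrightarrow> (\<forall>x. x \<noteq> 0 \<longrightarrow> tform m A x > 0)"

definition Br_eigenpair :: "nat \<Rightarrow> ('n::finite) tensor \<Rightarrow> 'n tensor \<Rightarrow> real \<Rightarrow> real^'n \<Rightarrow> bool" where
  "Br_eigenpair m A B lam x \<longleftrightarrow> x \<noteq> 0 \<and> tvec m A x = lam *\<^sub>R tvec m B x"

definition Br_eigenvalue :: "nat \<Rightarrow> ('n::finite) tensor \<Rightarrow> 'n tensor \<Rightarrow> real \<Rightarrow> bool" where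
  "Br_eigenvalue m A B lam \<longleftrightarrow> (\<exists>x. Br_eigenpair m A B lam x)"

definition f2 :: "nat \<Rightarrow> ('n::finite) tensor \<Rightarrow> 'n tensor \<Rightarrow> real^'n \<Rightarrow> real" where
  "f2 m A B x = (1 / (2 * real m)) * (tform m B x)^2 - (1 / real m) * tform m A x"

definition critical_point :: "(real^'n \<Rightarrow> real) \<Rightarrow> real^('n::finite) \<Rightarrow> bool" where
  "critical_point f x \<longleftrightarrow> (f has_derivative (\<lambda>h. 0)) (at x)"

end

theory Submission
  imports Defs "HOL-Real_Asymp.Real_Asymp"
begin

text \<open>A nonzero critical point of f2 satisfies A x^(m-1) = (B x^m) B x^(m-1), so it is a
  B_r-eigenvector whose eigenvalue \<lambda> = B x^m is positive, and conversely. Euler's identity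
  A x^(m-1) \<bullet> x = A x^m then gives f2 x = -\<lambda>^2/(2m). Positive definiteness yields
  B x^m \<ge> c |x|^m, while |A x^m| \<le> C |x|^m, so f2 is coercive and attains its minimum at a
  critical point. Comparing -\<lambda>^2/(2m) \<ge> -\<lambda>_max^2/(2m) with f2 0 = 0 identifies the minimum,
  and shows 0 is the only minimiser when \<lambda>_max \<le> 0.\<close>

lemma sum_lists_length_Suc:
  fixes g :: "('n::finite) list \<Rightarrow> 'a::comm_monoid_add"
  shows "sum g {is. length is = Suc k} = (\<Sum>i\<in>UNIV. \<Sum>is\<in>{is. length is = k}. g (i # is))"
proof -
  have lists_Suc: "{is::'n list. length is = Suc k} = (\<lambda>(i, is). i # is) ` (UNIV \<times> {is. length is = k})"
    by (auto simp: length_Suc_conv image_iff)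
  have "inj_on (\<lambda>(i, is). i # is) (UNIV \<times> {is::'n list. length is = k})"
    by (auto simp: inj_on_def)
  then have "sum g {is. length is = Suc k} = (\<Sum>p\<in>UNIV \<times> {is. length is = k}. g (fst p # snd p))"
    unfolding lists_Suc by (subst sum.reindex) (auto intro!: sum.cong)
  also have "\<dots> = (\<Sum>i\<in>UNIV. \<Sum>is\<in>{is. length is = k}. g (i # is))"
    by (simp add: sum.cartesian_product split_beta)
  finally show ?thesis .
qed

lemma tvec_inner_self:
  assumes "m > 0"
  shows "tvec m A x \<bullet> x = tform m A x"
proof -
  obtain k where m: "m = Suc k" using assms gr0_conv_Suc by blast
  have "tvec m A x \<bullet> x
      = (\<Sum>i\<in>UNIV. (\<Sum>is\<in>{is. length is = k}. A (i # is) * prod_list (map (\<lambda>j. x $ j) is)) * x $ i)"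
    by (simp add: tvec_def inner_vec_def m mult.commute)
  also have "\<dots> = (\<Sum>i\<in>UNIV. \<Sum>is\<in>{is. length is = k}. A (i # is) * prod_list (map (\<lambda>j. x $ j) (i # is)))"
    by (simp add: sum_distrib_right sum_distrib_left mult_ac)
  also have "\<dots> = tform m A x"
    unfolding tform_def m by (rule sum_lists_length_Suc[symmetric])
  finally show ?thesis .
qed

lemma prod_list_map_scaleR_nth:
  "prod_list (map (\<lambda>j. (c *\<^sub>R x) $ j) is) = c ^ length is * prod_list (map (\<lambda>j. x $ j) is)"
  by (induction "is") auto

lemma tform_scaleR: "tform m A (c *\<^sub>R x) = c ^ m * tform m A x"
  unfolding tform_def by (simp add: prod_list_map_scaleR_nth sum_distrib_left mult_ac)

lemma tvec_scaleR: "tvec m A (c *\<^sub>R x) = c ^ (m - 1) *\<^sub>R tvec m A x"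
  unfolding tvec_def by (simp add: vec_eq_iff prod_list_map_scaleR_nth sum_distrib_left mult_ac)

lemma tform_0: "m > 0 \<Longrightarrow> tform m A 0 = 0"
  using tform_scaleR[of m A 0 0] by (simp add: power_0_left)

lemma tvec_0: "m > 1 \<Longrightarrow> tvec m A 0 = 0"
  using tvec_scaleR[of m A 0 0] by (simp add: power_0_left)

lemma continuous_on_tform:
  fixes A :: "('n::finite) tensor"
  shows "continuous_on S (tform m A)"
proof -
  have "continuous_on S (\<lambda>x::real^'n. prod_list (map (\<lambda>j. x $ j) is))" for "is"
    by (induction "is") (auto intro!: continuous_intros)
  then show ?thesis
    unfolding tform_def by (auto intro!: continuous_intros)
qed

lemma tform_eq_norm_power_sgn: "tform m A x = norm x ^ m * tform m A (sgn x)"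
proof (cases "x = 0")
  case False
  then have "x = norm x *\<^sub>R sgn x" by (simp add: sgn_div_norm)
  then show ?thesis by (metis tform_scaleR)
qed (use tform_scaleR[of m A 0 0] in simp)

lemma tform_abs_le_norm_power:
  fixes A :: "('n::finite) tensor"
  shows "\<exists>C. \<forall>x. \<bar>tform m A x\<bar> \<le> C * norm x ^ m"
proof -
  obtain a where a: "\<forall>y\<in>cball 0 1. \<bar>tform m A y\<bar> \<le> \<bar>tform m A a\<bar>"
    using continuous_attains_sup[of "cball (0::real^'n) 1" "\<lambda>y. \<bar>tform m A y\<bar>"]
    by (auto intro: continuous_intros continuous_on_tform)
  have "\<bar>tform m A x\<bar> \<le> \<bar>tform m A a\<bar> * norm x ^ m" for x
    using a[rule_format, of "sgn x"]
    by (auto simp: tform_eq_norm_power_sgn[of m A x] abs_mult mult.commute mult_left_mono norm_sgn)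
  then show ?thesis by blast
qed

lemma pos_def_tensor_ge_norm_power:
  fixes B :: "('n::finite) tensor"
  assumes "pos_def_tensor m B"
  shows "\<exists>c>0. \<forall>x. c * norm x ^ m \<le> tform m B x"
proof -
  obtain u where u: "u \<in> sphere 0 1" "\<forall>y\<in>sphere 0 1. tform m B u \<le> tform m B y"
    using continuous_attains_inf[of "sphere (0::real^'n) 1" "tform m B"] continuous_on_tform
    by fastforce
  have "u \<noteq> 0" using u(1) by auto
  then have "tform m B u > 0" using assms by (simp add: pos_def_tensor_def)
  moreover have "tform m B u * norm x ^ m \<le> tform m B x" for x
  proof (cases "x = 0")
    case True
    then show ?thesis using tform_scaleR[of m B 0 u] by simp
  next
    case False
    then show ?thesis
      using u(2) by (auto simp: tform_eq_norm_power_sgn[of m B x] norm_sgn mult.commute mult_left_mono)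
  qed
  ultimately show ?thesis by blast
qed

lemma has_derivative_f2:
  assumes "m > 0" and "weakly_symmetric m A" and "weakly_symmetric m B"
  shows "(f2 m A B has_derivative (\<lambda>h. (tform m B x *\<^sub>R tvec m B x - tvec m A x) \<bullet> h)) (at x)"
proof -
  have dA: "(tform m A has_derivative (\<lambda>h. (real m *\<^sub>R tvec m A x) \<bullet> h)) (at x)"
    and dB: "(tform m B has_derivative (\<lambda>h. (real m *\<^sub>R tvec m B x) \<bullet> h)) (at x)"
    using assms(2,3) by (auto simp: weakly_symmetric_def)
  have "(f2 m A B has_derivative (\<lambda>h. (1 / (2 * real m)) * (of_nat 2 * ((real m *\<^sub>R tvec m B x) \<bullet> h) * tform m B x ^ (2 - 1))
       - (1 / real m) * ((real m *\<^sub>R tvec m A x) \<bullet> h))) (at x)"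
    unfolding f2_def[abs_def]
    by (intro derivative_intros dA dB)
  then show ?thesis
    by (rule has_derivative_eq_rhs) (use assms(1) in \<open>simp add: fun_eq_iff inner_diff_left\<close>)
qed

lemma critical_point_iff_gradient_eq_0:
  assumes "(f has_derivative (\<lambda>h. g \<bullet> h)) (at x)"
  shows "critical_point f x \<longleftrightarrow> g = 0"
proof
  assume "critical_point f x"
  then have "(\<lambda>h. g \<bullet> h) = (\<lambda>h. 0)"
    using assms has_derivative_unique unfolding critical_point_def by blast
  then show "g = 0" by (metis inner_eq_zero_iff)
qed (use assms in \<open>simp add: critical_point_def\<close>)

lemma critical_point_if_global_min:
  assumes "(f has_derivative f') (at x)" and "\<forall>y. f x \<le> f y"
  shows "critical_point f x"
  using differential_zero_maxmin[of x UNIV f f'] assms by (simp add: critical_point_def)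

lemma coercive_attains_min:
  fixes f :: "'a::{real_normed_vector,heine_borel} \<Rightarrow> real"
  assumes "continuous_on UNIV f" and "filterlim f at_top at_infinity"
  obtains z where "\<forall>y. f z \<le> f y"
proof -
  obtain b where b: "\<And>x. b \<le> norm x \<Longrightarrow> f 0 \<le> f x"
    using assms(2) unfolding filterlim_at_top eventually_at_infinity by blast
  have "cball 0 \<bar>b\<bar> \<noteq> {}" by simp
  then obtain z where z: "\<forall>y\<in>cball 0 \<bar>b\<bar>. f z \<le> f y"
    using continuous_attains_inf[OF compact_cball _ continuous_on_subset[OF assms(1)]] by blast
  have "f z \<le> f y" for y
  proof (cases "y \<in> cball 0 \<bar>b\<bar>")
    case False
    then have "f 0 \<le> f y" by (intro b) simp
    moreover have "f z \<le> f 0" using z by simp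
    ultimately show ?thesis by linarith
  qed (use z in blast)
  then show thesis using that by blast
qed

lemma f2_coercive:
  fixes A B :: "('n::finite) tensor"
  assumes "m > 0" and "pos_def_tensor m B"
  shows "filterlim (f2 m A B) at_top at_infinity"
proof -
  obtain c where c: "c > 0" "\<And>x. c * norm x ^ m \<le> tform m B x"
    using pos_def_tensor_ge_norm_power[OF assms(2)] by blast
  obtain C where C: "\<And>x. \<bar>tform m A x\<bar> \<le> C * norm x ^ m"
    using tform_abs_le_norm_power by blast
  define q where "q t = (c * t)\<^sup>2 / (2 * real m) - C * t / real m" for t
  have "filterlim q at_top at_top"
    unfolding q_def using c(1) assms(1) by real_asymp
  moreover have "filterlim (\<lambda>x::real^'n. norm x ^ m) at_top at_infinity"
    using filterlim_pow_at_top[OF assms(1) filterlim_norm_at_top] .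
  ultimately have lim: "filterlim (\<lambda>x::real^'n. q (norm x ^ m)) at_top at_infinity"
    by (rule filterlim_compose)
  have bound: "q (norm x ^ m) \<le> f2 m A B x" for x
  proof -
    have "(c * norm x ^ m)\<^sup>2 \<le> (tform m B x)\<^sup>2"
      using c by (intro power_mono) auto
    moreover have "tform m A x \<le> C * norm x ^ m"
      using C[of x] by linarith
    ultimately show ?thesis
      unfolding q_def f2_def using assms(1) by (auto intro!: diff_mono divide_right_mono)
  qed
  show ?thesis
    by (rule filterlim_at_top_mono[OF lim]) (simp add: bound)
qed

lemma critical_points_f2:
  fixes A B :: "('n::finite) tensor"
  assumes "m > 1" and "weakly_symmetric m A" and "weakly_symmetric m B" and "pos_def_tensor m B"
  shows "{x. critical_point (f2 m A B) x} =
           {0} \<union> {x. \<exists>lam. lam > 0 \<and> Br_eigenpair m A B lam x \<and> tform m B x = lam}"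
proof -
  have "critical_point (f2 m A B) x \<longleftrightarrow> tform m B x *\<^sub>R tvec m B x - tvec m A x = 0" for x
    by (rule critical_point_iff_gradient_eq_0[OF has_derivative_f2]) (use assms in auto)
  moreover have "x \<noteq> 0 \<Longrightarrow> tform m B x > 0" for x
    using assms(4) by (simp add: pos_def_tensor_def)
  ultimately show ?thesis
    using assms(1) by (auto simp: Br_eigenpair_def tform_0 tvec_0)
qed

lemma f2_normalised_eigenpair:
  assumes "m > 0" and "Br_eigenpair m A B lam x" and "tform m B x = lam"
  shows "f2 m A B x = - (1 / (2 * real m)) * lam\<^sup>2"
proof -
  have "tform m A x = tvec m A x \<bullet> x"
    by (rule tvec_inner_self[OF assms(1), symmetric])
  also have "\<dots> = lam * (tvec m B x \<bullet> x)"
    using assms(2) by (simp add: Br_eigenpair_def)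
  also have "\<dots> = lam\<^sup>2"
    using tvec_inner_self[OF assms(1), of B x] assms(3) by (simp add: power2_eq_square)
  finally show ?thesis
    unfolding f2_def using assms by (simp add: field_simps power2_eq_square)
qed

lemma Br_eigenpair_normalise:
  assumes "m > 0" and "pos_def_tensor m B" and "Br_eigenpair m A B lam y" and "lam > 0"
  obtains x where "Br_eigenpair m A B lam x" and "tform m B x = lam"
proof -
  have c: "tform m B y > 0"
    using assms(2,3) by (simp add: pos_def_tensor_def Br_eigenpair_def)
  define t where "t = root m (lam / tform m B y)"
  have "t > 0" and "t ^ m = lam / tform m B y"
    using assms(1,4) c by (simp_all add: t_def real_root_pow_pos2)
  then have "Br_eigenpair m A B lam (t *\<^sub>R y)" and "tform m B (t *\<^sub>R y) = lam"
    using assms(3) c by (auto simp: Br_eigenpair_def tvec_scaleR tform_scaleR)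
  then show thesis using that by blast
qed

lemma f2_critical_value_ge:
  assumes "m > 0" and "lmax \<ge> 0" and "\<forall>lam. Br_eigenvalue m A B lam \<longrightarrow> lam \<le> lmax"
    and "x \<in> {0} \<union> {x. \<exists>lam. lam > 0 \<and> Br_eigenpair m A B lam x \<and> tform m B x = lam}"
  shows "- (1 / (2 * real m)) * lmax\<^sup>2 \<le> f2 m A B x"
  using assms(4)
proof
  assume "x \<in> {0}"
  then show ?thesis using assms(1) by (simp add: f2_def tform_0)
next
  assume "x \<in> {x. \<exists>lam. lam > 0 \<and> Br_eigenpair m A B lam x \<and> tform m B x = lam}"
  then obtain lam where lam: "lam > 0" "Br_eigenpair m A B lam x" "tform m B x = lam" by blast
  then have "lam\<^sup>2 \<le> lmax\<^sup>2"
    using assms(3) by (auto simp: Br_eigenvalue_def intro: power_mono)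
  then show ?thesis
    using f2_normalised_eigenpair[OF assms(1) lam(2,3)] by (simp add: divide_right_mono)
qed

lemma f2_attains_global_min:
  fixes A B :: "('n::finite) tensor"
  assumes "m > 0" and "weakly_symmetric m A" and "weakly_symmetric m B" and "pos_def_tensor m B"
  obtains z where "\<forall>y. f2 m A B z \<le> f2 m A B y"
  using coercive_attains_min[OF _ f2_coercive[OF assms(1,4)]] has_derivative_f2[OF assms(1-3)]
  by (meson continuous_at_imp_continuous_on has_derivative_continuous)

lemma f2_global_min_at_normalised_eigenpair:
  fixes A B :: "('n::finite) tensor"
  assumes "m > 1" and "weakly_symmetric m A" and "weakly_symmetric m B" and "pos_def_tensor m B"
    and "lmax > 0" and "\<forall>lam. Br_eigenvalue m A B lam \<longrightarrow> lam \<le> lmax"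
    and "Br_eigenpair m A B lmax x" and "tform m B x = lmax"
  shows "f2 m A B x \<le> f2 m A B y"
proof -
  have "m > 0" using assms(1) by simp
  obtain z where z: "\<forall>y. f2 m A B z \<le> f2 m A B y"
    using f2_attains_global_min[OF \<open>m > 0\<close> assms(2-4)] .
  have "critical_point (f2 m A B) z"
    using critical_point_if_global_min[OF has_derivative_f2[OF \<open>m > 0\<close> assms(2,3)] z] .
  then have "- (1 / (2 * real m)) * lmax\<^sup>2 \<le> f2 m A B z"
    using f2_critical_value_ge[OF \<open>m > 0\<close> _ assms(6)] critical_points_f2[OF assms(1-4)] assms(5)
    by auto
  then show ?thesis
    using f2_normalised_eigenpair[OF \<open>m > 0\<close> assms(7,8)] z order_trans by fastforce
qed

theorem theorem6:
  fixes A B :: "('n::finite) tensor" and m :: nat and lmax :: real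
  assumes "m > 0" and "even m"
    and "weakly_symmetric m A" and "weakly_symmetric m B"
    and "pos_def_tensor m B"
    and "Br_eigenvalue m A B lmax"
    and "\<forall>lam. Br_eigenvalue m A B lam \<longrightarrow> lam \<le> lmax"
  shows
    "(\<forall>x. (f2 m A B has_derivative
            (\<lambda>h. (tform m B x *\<^sub>R tvec m B x - tvec m A x) \<bullet> h)) (at x))
     \<and> filterlim (f2 m A B) at_top at_infinity
     \<and> {x. critical_point (f2 m A B) x} =
         {0} \<union> {x. \<exists>lam. lam > 0 \<and> Br_eigenpair m A B lam x \<and> tform m B x = lam}
     \<and> (lmax > 0 \<longrightarrow>
          (\<exists>x. Br_eigenpair m A B lmax x \<and> tform m B x = lmax)
          \<and> (\<forall>x. Br_eigenpair m A B lmax x \<and> tform m B x = lmax \<longrightarrow>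
                 (\<forall>y. f2 m A B x \<le> f2 m A B y)
                 \<and> f2 m A B x = - (1 / (2 * real m)) * lmax\<^sup>2))
     \<and> (lmax \<le> 0 \<longrightarrow>
          {x. critical_point (f2 m A B) x} = {0}
          \<and> (\<forall>y. f2 m A B 0 \<le> f2 m A B y)
          \<and> (\<forall>x. (\<forall>y. f2 m A B x \<le> f2 m A B y) \<longrightarrow> x = 0))"
proof -
  \<comment> \<open>Evenness only excludes m = 1, where tvec m A 0 = A [i] need not vanish.\<close>
  have "m > 1" using assms(1,2) by (cases "m = 1") auto
  note crit = critical_points_f2[OF \<open>m > 1\<close> assms(3-5)]
  have minimiser_crit: "critical_point (f2 m A B) x" if "\<forall>y. f2 m A B x \<le> f2 m A B y" for x
    using critical_point_if_global_min[OF has_derivative_f2[OF assms(1,3,4)] that] .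
  obtain z where z: "\<forall>y. f2 m A B z \<le> f2 m A B y"
    using f2_attains_global_min[OF assms(1,3-5)] .
  have only_0: "{x. critical_point (f2 m A B) x} = {0}" if "lmax \<le> 0"
    using crit assms(7) that by (force simp: Br_eigenvalue_def)
  show ?thesis
  proof (intro conjI impI allI)
    show "\<exists>x. Br_eigenpair m A B lmax x \<and> tform m B x = lmax" if "lmax > 0"
      using assms(6) Br_eigenpair_normalise[OF assms(1,5) _ that] by (metis Br_eigenvalue_def)
    show "f2 m A B x \<le> f2 m A B y"
      if "lmax > 0" and "Br_eigenpair m A B lmax x \<and> tform m B x = lmax" for x y
      using f2_global_min_at_normalised_eigenpair[OF \<open>m > 1\<close> assms(3-5) that(1) assms(7)] that(2) by blast
    show "f2 m A B x = - (1 / (2 * real m)) * lmax\<^sup>2"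
      if "lmax > 0" and "Br_eigenpair m A B lmax x \<and> tform m B x = lmax" for x
      using f2_normalised_eigenpair[OF assms(1)] that(2) by blast
    show "f2 m A B 0 \<le> f2 m A B y" if "lmax \<le> 0" for y
      using minimiser_crit[OF z] only_0[OF that] z by (metis mem_Collect_eq singletonD)
    show "x = 0" if "lmax \<le> 0" and "\<forall>y. f2 m A B x \<le> f2 m A B y" for x
      using minimiser_crit[OF that(2)] only_0[OF that(1)] by auto
  qed (use has_derivative_f2[OF assms(1,3,4)] f2_coercive[OF assms(1,5)] crit only_0 in auto)
qed

end
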